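(* For positive integers $D_1,D_2$, integers $a,b$ with $(a,D_1)=(b,D_2)=1$, and integers $u,t$, \[ \widehat S(a,u,t,b;D_1,D_2)=\widehat S(b,t,u,a;D_2,D_1). \]
   Context: Notation: $e(x)=e^{2\pi ix}$. For integers $m_1,m_2,n_1,n_2$ and positive integers $D_1,D_2$, the $GL_3$ Kloosterman sum is \[ S(m_1,m_2,n_1,n_2;D_1,D_2)=\sum e\Big(\frac{m_1B_1+n_1(Y_1D_2-Z_1B_2)}{D_1}\Big)e\Big(\frac{m_2B_2+n_2(Y_2D_1-Z_2B_1)}{D_2}\Big), \] the sum over $B_1,C_1 \bmod D_1$, $B_2,C_2\bmod D_2$ with $\gcd(B_1,C_1,D_1)=\gcd(B_2,C_2,D_2)=1$ and $D_1C_2+B_1B_2+C_1D_2\equiv 0\pmod{D_1D_2}$, where $Y_1B_1+Z_1C_1\equiv 1\pmod{D_1}$, $Y_2B_2+Z_2C_2\equiv1\pmod{D_2}$ (independent of choices). For $(a,D_1)=(b,D_2)=1$, \[ \widehat S(a,u,t,b;D_1,D_2)=\frac{1}{D_1D_2}\sum_{x\bmod D_1}\sum_{y\bmod D_2}S(a,y,x,b;D_1,D_2)\,e\Big(\frac{-xt}{D_1}\Big)e\Big(\frac{-yu}{D_2}\Big). \] *)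

theory Defs
  imports "HOL-Analysis.Analysis" "HOL-Number_Theory.Cong"
begin

definition ee :: "real \<Rightarrow> complex" where
  "ee x = exp (2 * of_real pi * \<i> * of_real x)"

definition bez :: "int \<Rightarrow> int \<Rightarrow> int \<Rightarrow> int \<times> int" where
  "bez B C D = (SOME (y, z). [y * B + z * C = 1] (mod D))"

definition kl_index :: "int \<Rightarrow> int \<Rightarrow> (int \<times> int \<times> int \<times> int) set" where
  "kl_index D1 D2 = {(B1, C1, B2, C2). B1 \<in> {0..<D1} \<and> C1 \<in> {0..<D1} \<and>
      B2 \<in> {0..<D2} \<and> C2 \<in> {0..<D2} \<and>
      gcd (gcd B1 C1) D1 = 1 \<and> gcd (gcd B2 C2) D2 = 1 \<and>
      [D1 * C2 + B1 * B2 + C1 * D2 = 0] (mod (D1 * D2))}"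

definition kl_sum :: "int \<Rightarrow> int \<Rightarrow> int \<Rightarrow> int \<Rightarrow> int \<Rightarrow> int \<Rightarrow> complex" where
  "kl_sum m1 m2 n1 n2 D1 D2 =
    (\<Sum>(B1, C1, B2, C2) \<in> kl_index D1 D2.
       (case bez B1 C1 D1 of (Y1, Z1) \<Rightarrow>
        case bez B2 C2 D2 of (Y2, Z2) \<Rightarrow>
          ee (of_int (m1 * B1 + n1 * (Y1 * D2 - Z1 * B2)) / of_int D1) *
          ee (of_int (m2 * B2 + n2 * (Y2 * D1 - Z2 * B1)) / of_int D2)))"

definition kl_hat :: "int \<Rightarrow> int \<Rightarrow> int \<Rightarrow> int \<Rightarrow> int \<Rightarrow> int \<Rightarrow> complex" where
  "kl_hat a u t b D1 D2 =
    (1 / of_int (D1 * D2)) *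
    (\<Sum>x \<in> {0..<D1}. \<Sum>y \<in> {0..<D2}.
       kl_sum a y x b D1 D2 * ee (of_int (- x * t) / of_int D1) *
       ee (of_int (- y * u) / of_int D2))"

end

theory Submission
  imports Defs
begin

text \<open>Opening the Fourier transform and summing the additive characters over x and y reduces
  kl_hat a u t b D1 D2 to the sum of e(a B1 / D1) e(b Q / D2) over the index tuples (B1, C1, B2, C2)
  with T = t (mod D1) and B2 = u (mod D2), where T = Y1 D2 - Z1 B2 and Q = Y2 D1 - Z2 B1 are the residues
  occurring in the Kloosterman sum. The index set carries an involution exchanging (B1, B2) with (T, Q),
  while swapping the two halves of a tuple exchanges the roles of D1 and D2; together they identify the
  two reduced sums.\<close>

section \<open>Additive characters\<close>

lemma ee_add: "ee (x + y) = ee x * ee y"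
  unfolding ee_def by (simp add: distrib_left exp_add)

lemma ee_of_int: "ee (of_int n) = 1"
  unfolding ee_def using exp_integer_2pi[of "of_int n"] by (simp add: algebra_simps)

lemma ee_eq_1_iff: "ee x = 1 \<longleftrightarrow> x \<in> \<int>"
proof
  assume "ee x = 1"
  then obtain n :: int where "2 * pi * x = of_int (2 * n) * pi"
    unfolding ee_def exp_eq_1 by (auto simp: algebra_simps)
  then show "x \<in> \<int>" by simp
qed (auto elim!: Ints_cases simp: ee_of_int)

lemma ee_frac_add:
  "ee (of_int (m + n) / of_int D) = ee (of_int m / of_int D) * ee (of_int n / of_int D)"
  by (simp add: add_divide_distrib ee_add)

lemma ee_frac_cong:
  fixes k k' D :: int
  assumes "D \<noteq> 0" and "[k = k'] (mod D)"
  shows "ee (of_int k / of_int D) = ee (of_int k' / of_int D)"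
proof -
  obtain m where "k = k' + D * m"
    using assms(2) by (metis cong_iff_lin cong_sym)
  then have "of_int k / of_int D = of_int k' / of_int D + (of_int m :: real)"
    using assms(1) by (simp add: field_simps)
  then show ?thesis by (simp add: ee_add ee_of_int)
qed

lemma ee_frac_power: "ee (of_int (int n * k) / of_int D) = ee (of_int k / of_int D) ^ n"
proof (induction n)
  case (Suc n)
  have "int (Suc n) * k = k + int n * k" by (simp add: algebra_simps)
  then show ?case by (simp only: ee_frac_add Suc power_Suc)
qed (simp add: ee_def)

lemma ee_frac_shift:
  "ee (of_int (m + x * T) / of_int D) * ee (of_int (- x * t) / of_int D) =
   ee (of_int m / of_int D) * ee (of_int (x * (T - t)) / of_int D)"
proof -
  have "m + x * T + - x * t = m + x * (T - t)" by algebra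
  then show ?thesis by (simp only: ee_frac_add[symmetric])
qed

lemma sum_ee_frac:
  fixes D k :: int
  assumes "D > 0"
  shows "(\<Sum>x\<in>{0..<D}. ee (of_int (x * k) / of_int D)) = (if D dvd k then of_int D else 0)"
proof -
  define z where "z = ee (of_int k / of_int D)"
  have "(\<Sum>x\<in>{0..<D}. ee (of_int (x * k) / of_int D)) = (\<Sum>n<nat D. ee (of_int (int n * k) / of_int D))"
    by (rule sum.reindex_bij_witness[where i = int and j = nat]) auto
  also have "\<dots> = (\<Sum>n<nat D. z ^ n)" by (simp only: z_def ee_frac_power)
  finally have sum_eq: "(\<Sum>x\<in>{0..<D}. ee (of_int (x * k) / of_int D)) = (\<Sum>n<nat D. z ^ n)" .
  have z_eq_1_iff: "z = 1 \<longleftrightarrow> D dvd k"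
  proof -
    have "z = 1 \<longleftrightarrow> (\<exists>m::int. of_int k / of_int D = (of_int m :: real))"
      by (auto simp: z_def ee_eq_1_iff elim!: Ints_cases)
    also have "\<dots> \<longleftrightarrow> D dvd k"
      using assms by (auto simp: field_simps dvd_def simp flip: of_int_mult)
    finally show ?thesis .
  qed
  have "z ^ nat D = 1"
    using assms ee_frac_power[of "nat D" k D] by (simp add: z_def ee_of_int)
  then show ?thesis
    using sum_eq z_eq_1_iff assms by (auto simp: geometric_sum)
qed

section \<open>Linear congruences\<close>

lemma cong_iff_diff_eq_mult: "[a = b] (mod m) \<longleftrightarrow> (\<exists>k. a - b = m * (k::int))"
  by (simp add: cong_iff_dvd_diff dvd_def)

lemma gcd_eq_1_of_combination:
  fixes u v w x y z :: int
  assumes "u * x + v * y + w * z = 1"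
  shows "gcd (gcd u v) w = 1"
proof -
  have "gcd (gcd u v) w dvd u * x + v * y + w * z"
    by (meson dvd_add dvd_mult2 dvd_trans gcd_dvd1 gcd_dvd2)
  then show ?thesis using assms by simp
qed

lemma bez_cong:
  fixes B C D :: int
  assumes "gcd (gcd B C) D = 1"
  shows "[fst (bez B C D) * B + snd (bez B C D) * C = 1] (mod D)"
proof -
  obtain u v where uv: "u * B + v * C = gcd B C" using bezout_int by blast
  obtain x where "[gcd B C * x = 1] (mod D)" using cong_solve_int[of "gcd B C" D] assms by auto
  then have "[(x * u) * B + (x * v) * C = 1] (mod D)"
    by (simp add: uv[symmetric] algebra_simps)
  then have "\<exists>p. (\<lambda>(y, z). [y * B + z * C = 1] (mod D)) p" by auto
  then have "(\<lambda>(y, z). [y * B + z * C = 1] (mod D)) (bez B C D)"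
    unfolding bez_def by (rule someI_ex)
  then show ?thesis by (simp add: case_prod_beta)
qed

lemma bezout_cong_solve_iff:
  fixes Y Z p c \<alpha> \<beta> x D :: int
  assumes bezout: "[Y * p + Z * c = 1] (mod D)" and consistent: "[c * \<alpha> = p * \<beta>] (mod D)"
  shows "[Y * \<alpha> + Z * \<beta> = x] (mod D) \<longleftrightarrow> [x * p = \<alpha>] (mod D) \<and> [x * c = \<beta>] (mod D)"
proof -
  obtain k where k: "Y * p + Z * c - 1 = D * k" using bezout unfolding cong_iff_diff_eq_mult by blast
  obtain l where l: "c * \<alpha> - p * \<beta> = D * l" using consistent unfolding cong_iff_diff_eq_mult by blast
  show ?thesis
  proof
    assume "[Y * \<alpha> + Z * \<beta> = x] (mod D)"
    then obtain m where m: "Y * \<alpha> + Z * \<beta> - x = D * m" unfolding cong_iff_diff_eq_mult by blast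
    have "x * p - \<alpha> = D * (\<alpha> * k - Z * l - p * m)" using k l m by algebra
    moreover have "x * c - \<beta> = D * (\<beta> * k + Y * l - c * m)" using k l m by algebra
    ultimately show "[x * p = \<alpha>] (mod D) \<and> [x * c = \<beta>] (mod D)"
      unfolding cong_iff_diff_eq_mult by blast
  next
    assume "[x * p = \<alpha>] (mod D) \<and> [x * c = \<beta>] (mod D)"
    then obtain m n where m: "x * p - \<alpha> = D * m" and n: "x * c - \<beta> = D * n"
      unfolding cong_iff_diff_eq_mult by blast
    have "Y * \<alpha> + Z * \<beta> - x = D * (x * k - Y * m - Z * n)" using k m n by algebra
    then show "[Y * \<alpha> + Z * \<beta> = x] (mod D)" unfolding cong_iff_diff_eq_mult by blast
  qed
qed

definition bez_solve :: "int \<Rightarrow> int \<Rightarrow> int \<Rightarrow> int \<Rightarrow> int \<Rightarrow> int" where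
  "bez_solve B C D \<alpha> \<beta> = (fst (bez B C D) * \<alpha> + snd (bez B C D) * \<beta>) mod D"

lemma bez_solve_eq_iff:
  fixes B C D \<alpha> \<beta> x :: int
  assumes "gcd (gcd B C) D = 1" and "[C * \<alpha> = B * \<beta>] (mod D)" and "x \<in> {0..<D}"
  shows "bez_solve B C D \<alpha> \<beta> = x \<longleftrightarrow> [x * B = \<alpha>] (mod D) \<and> [x * C = \<beta>] (mod D)"
proof -
  have "bez_solve B C D \<alpha> \<beta> = x \<longleftrightarrow> [fst (bez B C D) * \<alpha> + snd (bez B C D) * \<beta> = x] (mod D)"
    using assms(3) by (simp add: bez_solve_def cong_def)
  then show ?thesis using bezout_cong_solve_iff[OF bez_cong[OF assms(1)] assms(2)] by simp
qed

section \<open>The residues in the Kloosterman sum\<close>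

type_synonym kl_tuple = "int \<times> int \<times> int \<times> int"

definition kl_swap :: "kl_tuple \<Rightarrow> kl_tuple" where
  "kl_swap = (\<lambda>(B1, C1, B2, C2). (B2, C2, B1, C1))"

text \<open>With (Y1, Z1) = bez B1 C1 D1, kl_T is the residue (Y1 D2 - Z1 B2) mod D1 in the first exponential
  of the Kloosterman sum; kl_Q, the residue (Y2 D1 - Z2 B1) mod D2 in the second one, is the same
  construction applied to the tuple with its two halves swapped.\<close>

definition kl_T :: "int \<Rightarrow> int \<Rightarrow> kl_tuple \<Rightarrow> int" where
  "kl_T D1 D2 = (\<lambda>(B1, C1, B2, C2). bez_solve B1 C1 D1 D2 (- B2))"

definition kl_Q :: "int \<Rightarrow> int \<Rightarrow> kl_tuple \<Rightarrow> int" where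
  "kl_Q D1 D2 v = kl_T D2 D1 (kl_swap v)"

lemma kl_swap_swap [simp]: "kl_swap (kl_swap v) = v"
  by (simp add: kl_swap_def split: prod.split)

lemma kl_swap_mem: "v \<in> kl_index D1 D2 \<Longrightarrow> kl_swap v \<in> kl_index D2 D1"
  by (auto simp: kl_swap_def kl_index_def ac_simps)

lemma kl_T_swap: "kl_T D2 D1 (kl_swap v) = kl_Q D1 D2 v"
  by (simp add: kl_Q_def)

lemma kl_Q_swap: "kl_Q D2 D1 (kl_swap v) = kl_T D1 D2 v"
  by (simp add: kl_Q_def)

lemma fst_kl_swap: "fst (kl_swap v) = fst (snd (snd v))"
  and fst_snd_snd_kl_swap: "fst (snd (snd (kl_swap v))) = fst v"
  by (simp_all add: kl_swap_def split: prod.split)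

lemma sum_kl_index_swap: "(\<Sum>w\<in>kl_index D2 D1. g w) = (\<Sum>v\<in>kl_index D1 D2. g (kl_swap v))"
  by (rule sum.reindex_bij_witness[where i = kl_swap and j = kl_swap]) (simp_all add: kl_swap_mem)

lemma kl_T_range: "D1 > 0 \<Longrightarrow> kl_T D1 D2 v \<in> {0..<D1}"
  by (cases v) (simp add: kl_T_def bez_solve_def)

lemma kl_Q_range: "D2 > 0 \<Longrightarrow> kl_Q D1 D2 v \<in> {0..<D2}"
  using kl_T_range[of D2 D1] by (simp add: kl_Q_def)

lemma kl_sum_eq:
  assumes "D1 > 0" and "D2 > 0"
  shows "kl_sum m1 m2 n1 n2 D1 D2 = (\<Sum>v\<in>kl_index D1 D2.
     ee (of_int (m1 * fst v + n1 * kl_T D1 D2 v) / of_int D1) *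
     ee (of_int (m2 * fst (snd (snd v)) + n2 * kl_Q D1 D2 v) / of_int D2))"
  unfolding kl_sum_def
proof (intro sum.cong refl, clarify)
  fix B1 C1 B2 C2
  obtain Y1 Z1 Y2 Z2 where bez: "bez B1 C1 D1 = (Y1, Z1)" "bez B2 C2 D2 = (Y2, Z2)"
    by fastforce
  have "[m1 * B1 + n1 * (Y1 * D2 - Z1 * B2) = m1 * B1 + n1 * kl_T D1 D2 (B1, C1, B2, C2)] (mod D1)"
    by (intro cong_add cong_mult cong_refl) (simp add: kl_T_def bez_solve_def bez)
  with assms(1) have T: "ee (of_int (m1 * B1 + n1 * (Y1 * D2 - Z1 * B2)) / of_int D1) =
      ee (of_int (m1 * B1 + n1 * kl_T D1 D2 (B1, C1, B2, C2)) / of_int D1)"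
    by (intro ee_frac_cong) simp_all
  have "[m2 * B2 + n2 * (Y2 * D1 - Z2 * B1) = m2 * B2 + n2 * kl_Q D1 D2 (B1, C1, B2, C2)] (mod D2)"
    by (intro cong_add cong_mult cong_refl) (simp add: kl_Q_def kl_swap_def kl_T_def bez_solve_def bez)
  with assms(2) have Q: "ee (of_int (m2 * B2 + n2 * (Y2 * D1 - Z2 * B1)) / of_int D2) =
      ee (of_int (m2 * B2 + n2 * kl_Q D1 D2 (B1, C1, B2, C2)) / of_int D2)"
    by (intro ee_frac_cong) simp_all
  show "(case bez B1 C1 D1 of (Y1, Z1) \<Rightarrow> case bez B2 C2 D2 of (Y2, Z2) \<Rightarrow>
      ee (of_int (m1 * B1 + n1 * (Y1 * D2 - Z1 * B2)) / of_int D1) *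
      ee (of_int (m2 * B2 + n2 * (Y2 * D1 - Z2 * B1)) / of_int D2)) =
    ee (of_int (m1 * fst (B1, C1, B2, C2) + n1 * kl_T D1 D2 (B1, C1, B2, C2)) / of_int D1) *
    ee (of_int (m2 * fst (snd (snd (B1, C1, B2, C2))) + n2 * kl_Q D1 D2 (B1, C1, B2, C2)) / of_int D2)"
    by (simp only: bez prod.case fst_conv snd_conv T Q)
qed

lemma kl_hat_eq:
  assumes "D1 > 0" and "D2 > 0"
  shows "kl_hat a u t b D1 D2 = (\<Sum>v\<in>kl_index D1 D2.
     if [kl_T D1 D2 v = t] (mod D1) \<and> [fst (snd (snd v)) = u] (mod D2)
     then ee (of_int (a * fst v) / of_int D1) * ee (of_int (b * kl_Q D1 D2 v) / of_int D2) else 0)"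
proof -
  define f where
    "f v = ee (of_int (a * fst v) / of_int D1) * ee (of_int (b * kl_Q D1 D2 v) / of_int D2)" for v
  define g where "g v x = ee (of_int (x * (kl_T D1 D2 v - t)) / of_int D1)" for v x
  define h :: "kl_tuple \<Rightarrow> int \<Rightarrow> complex"
    where "h v y = ee (of_int (y * (fst (snd (snd v)) - u)) / of_int D2)" for v y
  have summand: "kl_sum a y x b D1 D2 * ee (of_int (- x * t) / of_int D1) * ee (of_int (- y * u) / of_int D2)
      = (\<Sum>v\<in>kl_index D1 D2. f v * (g v x * h v y))" for x y
    unfolding kl_sum_eq[OF assms] sum_distrib_right
  proof (intro sum.cong refl)
    fix v
    have T: "ee (of_int (a * fst v + x * kl_T D1 D2 v) / of_int D1) * ee (of_int (- x * t) / of_int D1) =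
        ee (of_int (a * fst v) / of_int D1) * g v x"
      unfolding g_def by (rule ee_frac_shift)
    have Q: "ee (of_int (y * fst (snd (snd v)) + b * kl_Q D1 D2 v) / of_int D2) *
        ee (of_int (- y * u) / of_int D2) =
        ee (of_int (b * kl_Q D1 D2 v) / of_int D2) * h v y"
      unfolding h_def using ee_frac_shift[of "b * kl_Q D1 D2 v" y "fst (snd (snd v))" D2 u]
      by (simp only: add.commute)
    show "ee (of_int (a * fst v + x * kl_T D1 D2 v) / of_int D1) *
        ee (of_int (y * fst (snd (snd v)) + b * kl_Q D1 D2 v) / of_int D2) *
        ee (of_int (- x * t) / of_int D1) * ee (of_int (- y * u) / of_int D2) = f v * (g v x * h v y)"
      using arg_cong2[OF T Q, of "(*)"] by (simp add: f_def ac_simps)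
  qed
  have "kl_hat a u t b D1 D2 = 1 / of_int (D1 * D2) *
      (\<Sum>v\<in>kl_index D1 D2. \<Sum>x\<in>{0..<D1}. \<Sum>y\<in>{0..<D2}. f v * (g v x * h v y))"
    unfolding kl_hat_def summand by (subst sum.swap, subst (2) sum.swap) (rule refl)
  also have "\<dots> = (\<Sum>v\<in>kl_index D1 D2.
      1 / of_int (D1 * D2) * f v * ((\<Sum>x\<in>{0..<D1}. g v x) * (\<Sum>y\<in>{0..<D2}. h v y)))"
  proof -
    have "(\<Sum>x\<in>{0..<D1}. \<Sum>y\<in>{0..<D2}. f v * (g v x * h v y)) =
        f v * ((\<Sum>x\<in>{0..<D1}. g v x) * (\<Sum>y\<in>{0..<D2}. h v y))" for v
      by (simp only: sum_product) (simp only: sum_distrib_left)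
    then show ?thesis by (simp add: sum_distrib_left mult.assoc)
  qed
  also have "\<dots> = (\<Sum>v\<in>kl_index D1 D2.
      if [kl_T D1 D2 v = t] (mod D1) \<and> [fst (snd (snd v)) = u] (mod D2) then f v else 0)"
    unfolding g_def h_def sum_ee_frac[OF assms(1)] sum_ee_frac[OF assms(2)]
    using assms by (intro sum.cong refl) (simp add: cong_iff_dvd_diff)
  finally show ?thesis by (simp only: f_def)
qed

section \<open>The duality involution of the index set\<close>

lemma kl_T_eq_iff:
  assumes "(B1, C1, B2, C2) \<in> kl_index D1 D2" and "x \<in> {0..<D1}"
  shows "kl_T D1 D2 (B1, C1, B2, C2) = x \<longleftrightarrow> [x * B1 = D2] (mod D1) \<and> [x * C1 = - B2] (mod D1)"
proof -
  have gcd: "gcd (gcd B1 C1) D1 = 1"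
    and rel: "[D1 * C2 + B1 * B2 + C1 * D2 = 0] (mod D1 * D2)"
    using assms(1) by (auto simp: kl_index_def)
  obtain k where "D1 * C2 + B1 * B2 + C1 * D2 - 0 = D1 * D2 * k"
    using rel unfolding cong_iff_diff_eq_mult by blast
  then have "C1 * D2 - B1 * (- B2) = D1 * (D2 * k - C2)" by algebra
  then have "[C1 * D2 = B1 * (- B2)] (mod D1)" unfolding cong_iff_diff_eq_mult by blast
  then show ?thesis
    unfolding kl_T_def using bez_solve_eq_iff[OF gcd _ assms(2)] by simp
qed

lemma kl_Q_eq_iff:
  assumes "(B1, C1, B2, C2) \<in> kl_index D1 D2" and "x \<in> {0..<D2}"
  shows "kl_Q D1 D2 (B1, C1, B2, C2) = x \<longleftrightarrow> [x * B2 = D1] (mod D2) \<and> [x * C2 = - B1] (mod D2)"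
proof -
  have "(B2, C2, B1, C1) \<in> kl_index D2 D1"
    using kl_swap_mem[OF assms(1)] by (simp add: kl_swap_def)
  then show ?thesis using kl_T_eq_iff assms(2) by (simp add: kl_Q_def kl_swap_def)
qed

definition kl_C2 :: "int \<Rightarrow> int \<Rightarrow> int \<Rightarrow> int \<Rightarrow> int \<Rightarrow> int" where
  "kl_C2 D1 D2 B1 C1 B2 = (- (B1 * B2 + C1 * D2)) div D1 mod D2"

lemma kl_index_C2_eq:
  assumes "D1 > 0" and "(B1, C1, B2, C2) \<in> kl_index D1 D2"
  shows "C2 = kl_C2 D1 D2 B1 C1 B2"
proof -
  have C2: "C2 \<in> {0..<D2}" and "[D1 * C2 + B1 * B2 + C1 * D2 = 0] (mod D1 * D2)"
    using assms(2) by (auto simp: kl_index_def)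
  then obtain k where "D1 * C2 + B1 * B2 + C1 * D2 - 0 = D1 * D2 * k"
    unfolding cong_iff_diff_eq_mult by blast
  then have "- (B1 * B2 + C1 * D2) = D1 * (C2 + D2 * (- k))" by algebra
  then have "(- (B1 * B2 + C1 * D2)) div D1 = C2 + D2 * (- k)" using assms(1) by simp
  moreover have "(C2 + D2 * (- k)) mod D2 = C2" using C2 by (simp only: mod_mult_self2) simp
  ultimately show ?thesis by (simp add: kl_C2_def)
qed

lemma kl_C2_cong:
  assumes "D1 dvd B1 * B2 + C1 * D2"
  shows "[D1 * kl_C2 D1 D2 B1 C1 B2 + B1 * B2 + C1 * D2 = 0] (mod D1 * D2)"
proof -
  define g where "g = (- (B1 * B2 + C1 * D2)) div D1"
  have g: "D1 * g = - (B1 * B2 + C1 * D2)"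
    unfolding g_def using assms by (intro dvd_mult_div_cancel) (simp only: dvd_minus_iff)
  have "kl_C2 D1 D2 B1 C1 B2 = g - g div D2 * D2"
    by (simp add: kl_C2_def g_def minus_div_mult_eq_mod)
  then have "D1 * kl_C2 D1 D2 B1 C1 B2 + B1 * B2 + C1 * D2 - 0 = D1 * D2 * (- (g div D2))"
    using g by algebra
  then show ?thesis unfolding cong_iff_diff_eq_mult by blast
qed

lemma kl_A_consistent:
  fixes D1 D2 p c r C2 q w :: int
  assumes "D2 \<noteq> 0" and w: "q * r - D1 = D2 * w" and "[q * C2 = - p] (mod D2)"
    and "[D1 * C2 + p * r + c * D2 = 0] (mod D1 * D2)"
  shows "[c * (- q) = p * w] (mod D1)"
proof -
  obtain j where j: "q * C2 - (- p) = D2 * j" using assms(3) unfolding cong_iff_diff_eq_mult by blast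
  obtain k where k: "D1 * C2 + p * r + c * D2 - 0 = D1 * D2 * k"
    using assms(4) unfolding cong_iff_diff_eq_mult by blast
  have "D2 * (c * (- q) - p * w) = D2 * (D1 * (j - q * k))" using w j k by algebra
  then have "c * (- q) - p * w = D1 * (j - q * k)" using assms(1) by simp
  then show ?thesis unfolding cong_iff_diff_eq_mult by blast
qed

text \<open>The dual of (B1, C1, B2, C2) is (T, A, Q, C2'), where A solves A B1 = - Q, A C1 = (Q B2 - D1) / D2
  (mod D1) and C2' is forced by the congruence defining the index set. It is an involution of the index
  set exchanging (B1, B2) with (T, Q).\<close>

definition kl_A :: "int \<Rightarrow> int \<Rightarrow> kl_tuple \<Rightarrow> int" where
  "kl_A D1 D2 v = (case v of (B1, C1, B2, C2) \<Rightarrow>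
     bez_solve B1 C1 D1 (- kl_Q D1 D2 v) ((kl_Q D1 D2 v * B2 - D1) div D2))"

lemma kl_A_eq_iff:
  assumes "D1 > 0" and "D2 > 0" and v: "(p, c, r, C2) \<in> kl_index D1 D2" and x: "x \<in> {0..<D1}"
  shows "kl_A D1 D2 (p, c, r, C2) = x \<longleftrightarrow>
    [x * p = - kl_Q D1 D2 (p, c, r, C2)] (mod D1) \<and>
    [x * c = (kl_Q D1 D2 (p, c, r, C2) * r - D1) div D2] (mod D1)"
proof -
  define q where "q = kl_Q D1 D2 (p, c, r, C2)"
  have "q \<in> {0..<D2}" unfolding q_def using assms(2) by (rule kl_Q_range)
  then have q_r: "[q * r = D1] (mod D2)" and q_C2: "[q * C2 = - p] (mod D2)"
    using kl_Q_eq_iff[OF v] unfolding q_def by blast+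
  have w: "q * r - D1 = D2 * ((q * r - D1) div D2)"
    using q_r unfolding cong_iff_dvd_diff by (rule dvd_mult_div_cancel[symmetric])
  have gcd: "gcd (gcd p c) D1 = 1" and rel: "[D1 * C2 + p * r + c * D2 = 0] (mod D1 * D2)"
    using v by (auto simp: kl_index_def)
  have "D2 \<noteq> 0" using assms(2) by simp
  from kl_A_consistent[OF this w q_C2 rel] have "kl_A D1 D2 (p, c, r, C2) = x \<longleftrightarrow>
    [x * p = - q] (mod D1) \<and> [x * c = (q * r - D1) div D2] (mod D1)"
    unfolding kl_A_def q_def[symmetric] prod.case by (rule bez_solve_eq_iff[OF gcd _ x])
  then show ?thesis by (simp only: q_def)
qed

lemma kl_A_range: "D1 > 0 \<Longrightarrow> kl_A D1 D2 v \<in> {0..<D1}"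
  by (cases v) (simp add: kl_A_def bez_solve_def)

lemma kl_dual_coprime:
  fixes D1 D2 p c r s a q w :: int
  assumes "D1 \<noteq> 0"
    and "[s * p = D2] (mod D1)" "[s * c = - r] (mod D1)" "[a * p = - q] (mod D1)" "[a * c = w] (mod D1)"
    and qr: "q * r - D1 = D2 * w"
  defines "e \<equiv> (- (s * q + a * D2)) div D1"
  shows "D1 dvd s * q + a * D2"
    and "gcd (gcd s a) D1 = 1"
    and "gcd (gcd q e) D2 = 1"
    and "[r * e = - s] (mod D2)"
proof -
  obtain x y z m where x: "s * p - D2 = D1 * x" and y: "a * p - (- q) = D1 * y"
    and z: "s * c - (- r) = D1 * z" and m: "a * c - w = D1 * m"
    using assms(2-5) unfolding cong_iff_diff_eq_mult by meson
  have "- (s * q + a * D2) = D1 * (a * x - s * y)" using x y by algebra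
  then show "D1 dvd s * q + a * D2" by (metis dvd_minus_iff dvd_triv_left)
  have e: "e = a * x - s * y"
    unfolding e_def \<open>- (s * q + a * D2) = D1 * (a * x - s * y)\<close> using assms(1) by simp
  txt \<open>Substituting x, y, z, m into the exact identity D1 = q r - D2 w and dividing by D1 produces
    Bezout relations.\<close>
  have "D1 * (s * (p * m - y * c) + a * (x * c - z * p) + D1 * (y * z - x * m)) = D1 * 1"
    using x y z m qr by algebra
  then have "s * (p * m - y * c) + a * (x * c - z * p) + D1 * (y * z - x * m) = 1"
    using assms(1) by simp
  then show "gcd (gcd s a) D1 = 1" by (rule gcd_eq_1_of_combination)
  have "D1 * (q * z + e * c + D2 * m) = D1 * 1"
    unfolding e using x y z m qr by algebra
  then have "q * z + e * c + D2 * m = 1" using assms(1) by simp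
  then show "gcd (gcd q e) D2 = 1" by (rule gcd_eq_1_of_combination)
  have "D1 * (r * e - (- s)) = D1 * (D2 * (s * m - a * z))"
    unfolding e using x y z m qr by algebra
  then have "r * e - (- s) = D2 * (s * m - a * z)" using assms(1) by simp
  then show "[r * e = - s] (mod D2)" unfolding cong_iff_diff_eq_mult by blast
qed

lemma kl_dual_congs:
  assumes "D1 > 0" and "D2 > 0" and v: "(p, c, r, C2) \<in> kl_index D1 D2"
  defines "s \<equiv> kl_T D1 D2 (p, c, r, C2)" and "a \<equiv> kl_A D1 D2 (p, c, r, C2)"
    and "q \<equiv> kl_Q D1 D2 (p, c, r, C2)"
  shows "[s * p = D2] (mod D1)" and "[s * c = - r] (mod D1)"
    and "[a * p = - q] (mod D1)" and "[a * c = (q * r - D1) div D2] (mod D1)"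
    and "[q * r = D1] (mod D2)" and "[q * C2 = - p] (mod D2)"
    and "q * r - D1 = D2 * ((q * r - D1) div D2)"
proof -
  show "[s * p = D2] (mod D1)" "[s * c = - r] (mod D1)"
    using kl_T_eq_iff[OF v kl_T_range[OF assms(1), of D2 "(p, c, r, C2)"]]
    by (simp_all add: s_def)
  show "[a * p = - q] (mod D1)" "[a * c = (q * r - D1) div D2] (mod D1)"
    using kl_A_eq_iff[OF assms(1,2) v kl_A_range[OF assms(1), of D2 "(p, c, r, C2)"]]
    by (simp_all add: a_def q_def)
  show q_r: "[q * r = D1] (mod D2)" and "[q * C2 = - p] (mod D2)"
    using kl_Q_eq_iff[OF v kl_Q_range[OF assms(2), of D1 "(p, c, r, C2)"]]
    by (simp_all add: q_def)
  show "q * r - D1 = D2 * ((q * r - D1) div D2)"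
    using q_r unfolding cong_iff_dvd_diff by (rule dvd_mult_div_cancel[symmetric])
qed

definition kl_dual :: "int \<Rightarrow> int \<Rightarrow> kl_tuple \<Rightarrow> kl_tuple" where
  "kl_dual D1 D2 v =
    (let s = kl_T D1 D2 v; a = kl_A D1 D2 v; q = kl_Q D1 D2 v in (s, a, q, kl_C2 D1 D2 s a q))"

lemma kl_dual_mem_and_congs:
  assumes "D1 > 0" and "D2 > 0" and v: "(p, c, r, C2) \<in> kl_index D1 D2"
  obtains s a q C2' where "kl_dual D1 D2 (p, c, r, C2) = (s, a, q, C2')"
    and "(s, a, q, C2') \<in> kl_index D1 D2"
    and "[p * s = D2] (mod D1)" and "[p * a = - q] (mod D1)"
    and "[c * s = - r] (mod D1)" and "[c * a = (r * q - D1) div D2] (mod D1)"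
    and "[r * q = D1] (mod D2)" and "[r * C2' = - s] (mod D2)"
proof -
  define s a q where "s = kl_T D1 D2 (p, c, r, C2)" and "a = kl_A D1 D2 (p, c, r, C2)"
    and "q = kl_Q D1 D2 (p, c, r, C2)"
  define w where "w = (q * r - D1) div D2"
  note congs = kl_dual_congs[OF assms, folded s_def a_def q_def, folded w_def]
  have "D1 \<noteq> 0" using assms(1) by simp
  note coprime = kl_dual_coprime[OF this congs(1-4) congs(7)]
  define e where "e = (- (s * q + a * D2)) div D1"
  have dual: "kl_dual D1 D2 (p, c, r, C2) = (s, a, q, e mod D2)"
    by (simp add: kl_dual_def kl_C2_def Let_def s_def a_def q_def e_def)
  have "gcd (gcd q (e mod D2)) D2 = gcd (gcd q e) D2"
    by (metis gcd.assoc gcd.commute gcd_red_int)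
  then have mem: "(s, a, q, e mod D2) \<in> kl_index D1 D2"
    using assms(1,2) coprime(1-3) kl_C2_cong[OF coprime(1)]
      kl_T_range[of D1 D2] kl_A_range[of D1 D2] kl_Q_range[of D2 D1]
    by (simp add: kl_index_def s_def a_def q_def e_def kl_C2_def)
  have "[r * (e mod D2) = r * e] (mod D2)"
    by (intro cong_mult cong_refl) simp
  then have "[r * (e mod D2) = - s] (mod D2)"
    using coprime(4) unfolding e_def by (rule cong_trans)
  with congs(1-5) show thesis
    using that[OF dual mem] by (simp add: ac_simps w_def)
qed

lemma kl_dual_involution:
  assumes "D1 > 0" and "D2 > 0" and "v \<in> kl_index D1 D2"
  shows "kl_dual D1 D2 v \<in> kl_index D1 D2" and "kl_dual D1 D2 (kl_dual D1 D2 v) = v"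
proof -
  obtain p c r C2 where v: "v = (p, c, r, C2)" by (cases v)
  have p: "p \<in> {0..<D1}" and c: "c \<in> {0..<D1}" and r: "r \<in> {0..<D2}"
    using assms(3) by (auto simp: v kl_index_def)
  obtain s a q C2' where dual: "kl_dual D1 D2 v = (s, a, q, C2')"
    and mem: "(s, a, q, C2') \<in> kl_index D1 D2"
    and congs: "[p * s = D2] (mod D1)" "[p * a = - q] (mod D1)"
      "[c * s = - r] (mod D1)" "[c * a = (r * q - D1) div D2] (mod D1)"
      "[r * q = D1] (mod D2)" "[r * C2' = - s] (mod D2)"
    using kl_dual_mem_and_congs[OF assms(1,2) assms(3)[unfolded v]] unfolding v by blast
  show "kl_dual D1 D2 v \<in> kl_index D1 D2" using dual mem by simp
  have T: "kl_T D1 D2 (s, a, q, C2') = p" using kl_T_eq_iff[OF mem p] congs by simp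
  have Q: "kl_Q D1 D2 (s, a, q, C2') = r" using kl_Q_eq_iff[OF mem r] congs by simp
  have A: "kl_A D1 D2 (s, a, q, C2') = c" using kl_A_eq_iff[OF assms(1,2) mem c] congs by (simp add: Q)
  have "kl_dual D1 D2 (kl_dual D1 D2 v) = kl_dual D1 D2 (s, a, q, C2')" by (simp only: dual)
  also have "\<dots> = (p, c, r, kl_C2 D1 D2 p c r)" by (simp add: kl_dual_def Let_def T Q A)
  also have "kl_C2 D1 D2 p c r = C2" using kl_index_C2_eq assms(1,3) unfolding v by simp
  finally show "kl_dual D1 D2 (kl_dual D1 D2 v) = v" by (simp only: v)
qed

lemma sum_kl_index_dual:
  assumes "D1 > 0" and "D2 > 0"
  shows "(\<Sum>v\<in>kl_index D1 D2. h (fst v) (fst (snd (snd v))) (kl_T D1 D2 v) (kl_Q D1 D2 v)) =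
    (\<Sum>v\<in>kl_index D1 D2. h (kl_T D1 D2 v) (kl_Q D1 D2 v) (fst v) (fst (snd (snd v))))"
proof -
  have fst_dual: "fst (kl_dual D1 D2 v) = kl_T D1 D2 v"
    and fst_snd_snd_dual: "fst (snd (snd (kl_dual D1 D2 v))) = kl_Q D1 D2 v" for v
    by (simp_all add: kl_dual_def Let_def)
  note involution = kl_dual_involution[OF assms]
  show ?thesis
  proof (rule sum.reindex_bij_witness[where i = "kl_dual D1 D2" and j = "kl_dual D1 D2"])
    fix v assume v: "v \<in> kl_index D1 D2"
    have "kl_T D1 D2 (kl_dual D1 D2 v) = fst v" and "kl_Q D1 D2 (kl_dual D1 D2 v) = fst (snd (snd v))"
      using involution(2)[OF v] fst_dual[of "kl_dual D1 D2 v"] fst_snd_snd_dual[of "kl_dual D1 D2 v"]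
      by simp_all
    then show "h (kl_T D1 D2 (kl_dual D1 D2 v)) (kl_Q D1 D2 (kl_dual D1 D2 v))
        (fst (kl_dual D1 D2 v)) (fst (snd (snd (kl_dual D1 D2 v)))) =
      h (fst v) (fst (snd (snd v))) (kl_T D1 D2 v) (kl_Q D1 D2 v)"
      by (simp add: fst_dual fst_snd_snd_dual)
  qed (use involution in auto)
qed

theorem lemma6:
  fixes D1 D2 a b u t :: int
  assumes "D1 > 0" and "D2 > 0" and "coprime a D1" and "coprime b D2"
  shows "kl_hat a u t b D1 D2 = kl_hat b t u a D2 D1"
proof -
  define F where "F B1 B2 T Q = (if [T = t] (mod D1) \<and> [B2 = u] (mod D2)
    then ee (of_int (a * B1) / of_int D1) * ee (of_int (b * Q) / of_int D2) else 0)" for B1 B2 T Q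
  have "kl_hat a u t b D1 D2 =
      (\<Sum>v\<in>kl_index D1 D2. F (fst v) (fst (snd (snd v))) (kl_T D1 D2 v) (kl_Q D1 D2 v))"
    unfolding kl_hat_eq[OF assms(1,2)] F_def ..
  also have "\<dots> = (\<Sum>v\<in>kl_index D1 D2. F (kl_T D1 D2 v) (kl_Q D1 D2 v) (fst v) (fst (snd (snd v))))"
    by (rule sum_kl_index_dual[OF assms(1,2)])
  also have "\<dots> = kl_hat b t u a D2 D1"
    unfolding kl_hat_eq[OF assms(2,1)] sum_kl_index_swap[of _ D2 D1]
    unfolding F_def kl_T_swap kl_Q_swap fst_kl_swap fst_snd_snd_kl_swap
    by (intro sum.cong refl) (auto simp: mult.commute)
  finally show ?thesis .
qed

end
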